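(* Let $G$ be a finite graph whose vertex set is partitioned into stable sets $V_1,\ldots,V_r$. Let $x_1$ be a vertex in $V_r$, and suppose that $G[V_{[r-1]}]$ has an ISR (with respect to the partition $V_1,\ldots,V_{r-1}$). Suppose there do not exist a set $J \subseteq [r-1]$ and a set $D \subseteq V_J \cup \{x_1\}$ totally dominating $V_J \cup \{x_1\}$ with the following properties: (1) $D$ is the union of disjoint stable sets $X$ and $Y$; (2) $Y$ is a (not necessarily proper) partial ISR for $V_J$ (so $|Y| \le |J|$); (3) every vertex in $Y$ has exactly one neighbour in $X$ (so $|X| \le |Y|$); (4) $X$ contains $x_1$. Then $G$ has an ISR containing $x_1$.
   Context: For $J \subseteq [r] = \{1,\ldots,r\}$, $V_J$ denotes $\bigcup_{i \in J} V_i$ (with the partition into the sets $V_i$, $i\in J$), and $G[\cdot]$ denotes an induced subgraph, which inherits the partition. An independent system of representatives (ISR) of $(V_1,\ldots,V_r)$ is a stable set of size $r$ in $G$ meeting each $V_i$ exactly once. A partial ISR for $V_J$ is a stable set contained in $V_J$ meeting each $V_i$ ($i \in J$) at most once. A set $D$ totally dominates a vertex set $W$ if every vertex of $W$ (including those in $D$) has a neighbour in $D$. *)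

theory Defs
  imports Main
begin

text \<open>A graph is given by a symmetric irreflexive adjacency relation E on vertices;
  its vertex set is the union of the parts V 1, ..., V r.\<close>

definition stable :: "('a \<Rightarrow> 'a \<Rightarrow> bool) \<Rightarrow> 'a set \<Rightarrow> bool" where
  "stable E S \<longleftrightarrow> (\<forall>u\<in>S. \<forall>v\<in>S. \<not> E u v)"

definition VJ :: "(nat \<Rightarrow> 'a set) \<Rightarrow> nat set \<Rightarrow> 'a set" where
  "VJ V J = (\<Union>i\<in>J. V i)"

text \<open>ISR of the partition restricted to the index set J (i.e. of G[V_J]).\<close>
definition ISR :: "('a \<Rightarrow> 'a \<Rightarrow> bool) \<Rightarrow> (nat \<Rightarrow> 'a set) \<Rightarrow> nat set \<Rightarrow> 'a set \<Rightarrow> bool" where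
  "ISR E V J S \<longleftrightarrow> S \<subseteq> VJ V J \<and> stable E S \<and> card S = card J
      \<and> (\<forall>i\<in>J. card (S \<inter> V i) = 1)"

definition partial_ISR :: "('a \<Rightarrow> 'a \<Rightarrow> bool) \<Rightarrow> (nat \<Rightarrow> 'a set) \<Rightarrow> nat set \<Rightarrow> 'a set \<Rightarrow> bool" where
  "partial_ISR E V J S \<longleftrightarrow> S \<subseteq> VJ V J \<and> stable E S
      \<and> (\<forall>i\<in>J. card (S \<inter> V i) \<le> 1)"

definition totally_dominates :: "('a \<Rightarrow> 'a \<Rightarrow> bool) \<Rightarrow> 'a set \<Rightarrow> 'a set \<Rightarrow> bool" where
  "totally_dominates E D W \<longleftrightarrow> (\<forall>w\<in>W. \<exists>d\<in>D. E w d)"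

end

theory Submission
  imports Defs
begin

text \<open>Haxell's alternating-tree argument. Fix an ISR \<open>M\<close> of the first \<open>r - 1\<close> parts and grow a
  stable sequence \<open>x\<^sub>1, x\<^sub>2, \<dots>\<close> in which every new vertex lies in a part whose \<open>M\<close>-vertex is
  adjacent to an earlier vertex, while being non-adjacent to all earlier vertices and to their
  \<open>M\<close>-neighbours. Among all pairs \<open>(M, sequence)\<close>, take one whose list of \<open>M\<close>-degrees is
  lexicographically best, longer sequences and smaller degrees being better. If some vertex of
  \<open>V\<^sub>J \<union> {x\<^sub>1}\<close> were not dominated, then either it extends the sequence, or \<open>x\<^sub>1\<close> extends \<open>M\<close> to the
  desired ISR, or swapping a later vertex into \<open>M\<close> lowers the degree of an earlier one. So the
  sequence \<open>X\<close> and its \<open>M\<close>-neighbours \<open>Y\<close> form the forbidden dominating set.\<close>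

lemma finite_has_maximal_wrt:
  assumes "finite P" and "p \<in> P" and "trans R" and "irrefl R"
  obtains m where "m \<in> P" and "\<And>q. q \<in> P \<Longrightarrow> (m, q) \<notin> R"
proof -
  let ?R = "(R \<inter> P \<times> P)\<inverse>"
  have "trans ?R"
    using assms(3) unfolding trans_def by blast
  then have "acyclic ?R"
    using assms(4) by (simp add: acyclic_irrefl trancl_id irrefl_def)
  moreover have "finite ?R"
    using assms(1) by (auto intro: finite_subset[of _ "P \<times> P"])
  ultimately have "wf ?R"
    using finite_acyclic_wf by blast
  then obtain m where m: "m \<in> P" and min: "\<And>q. (q, m) \<in> ?R \<Longrightarrow> q \<notin> P"
    using wfE_min[OF _ assms(2)] by metis
  show thesis
    using that[OF m] min m by blast
qed

lemma VJ_mono: "I \<subseteq> K \<Longrightarrow> VJ V I \<subseteq> VJ V K"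
  unfolding VJ_def by blast

locale isr_partition =
  fixes E :: "'a \<Rightarrow> 'a \<Rightarrow> bool" and V :: "nat \<Rightarrow> 'a set" and r :: nat and x1 :: 'a
  assumes sym: "\<And>u v. E u v \<Longrightarrow> E v u"
    and irrefl: "\<And>v. \<not> E v v"
    and r_pos: "1 \<le> r"
    and fin: "finite (VJ V {1..r})"
    and disj: "\<And>i j. i \<in> {1..r} \<Longrightarrow> j \<in> {1..r} \<Longrightarrow> i \<noteq> j \<Longrightarrow> V i \<inter> V j = {}"
    and x1_part: "x1 \<in> V r"
begin

subsection \<open>Independent systems of representatives\<close>

lemma x1_notin_lower_part:
  assumes "i \<in> {1..r-1}"
  shows "x1 \<notin> V i"
proof -
  have "i \<in> {1..r}" "i \<noteq> r" using assms by auto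
  then show ?thesis using disj[of i r] r_pos x1_part by auto
qed

lemma VJ_lower_subset: "VJ V {1..r-1} \<subseteq> VJ V {1..r}"
  by (rule VJ_mono) auto

lemma ISR_lower_subset: "ISR E V {1..r-1} M \<Longrightarrow> M \<subseteq> VJ V {1..r}"
  using VJ_lower_subset unfolding ISR_def by blast

lemma ISR_lower_finite: "ISR E V {1..r-1} M \<Longrightarrow> finite M"
  using ISR_lower_subset fin finite_subset by blast

lemma ISR_part_eq_singleton:
  "\<lbrakk>ISR E V J M; j \<in> J; y \<in> M; y \<in> V j\<rbrakk> \<Longrightarrow> M \<inter> V j = {y}"
  unfolding ISR_def by (metis IntI card_1_singletonE singletonD)

lemma ISR_insert_x1:
  assumes M: "ISR E V {1..r-1} M" and no_nbr: "\<forall>v\<in>M. \<not> E x1 v"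
  shows "ISR E V {1..r} (insert x1 M)"
  unfolding ISR_def
proof (intro conjI ballI)
  have "x1 \<in> VJ V {1..r}"
    using x1_part r_pos unfolding VJ_def by auto
  then show "insert x1 M \<subseteq> VJ V {1..r}"
    using ISR_lower_subset[OF M] by blast
  have "stable E M"
    using M unfolding ISR_def by blast
  then show "stable E (insert x1 M)"
    using no_nbr irrefl sym unfolding stable_def by blast
  have "x1 \<notin> M"
    using M x1_notin_lower_part unfolding ISR_def VJ_def by blast
  then show "card (insert x1 M) = card {1..r}"
    using M ISR_lower_finite[OF M] r_pos unfolding ISR_def by simp
  fix i assume i: "i \<in> {1..r}"
  show "card (insert x1 M \<inter> V i) = 1"
  proof (cases "i = r")
    case True
    have "M \<inter> V r = {}"
    proof (rule ccontr)
      assume "M \<inter> V r \<noteq> {}"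
      then obtain v k where "v \<in> V r" "v \<in> V k" "k \<in> {1..r-1}"
        using M unfolding ISR_def VJ_def by blast
      moreover have "k \<in> {1..r}" "k \<noteq> r"
        using \<open>k \<in> {1..r-1}\<close> by auto
      ultimately show False
        using disj[of k r] r_pos by auto
    qed
    then show ?thesis
      using True x1_part by simp
  next
    case False
    then have "i \<in> {1..r-1}"
      using i by auto
    then show ?thesis
      using M x1_notin_lower_part unfolding ISR_def by simp
  qed
qed

lemma ISR_swap:
  assumes M: "ISR E V {1..r-1} M" and j: "j \<in> {1..r-1}" and y: "y \<in> M" "y \<in> V j"
    and w: "w \<in> V j" and no_nbr: "\<forall>v\<in>M. \<not> E w v"
  shows "ISR E V {1..r-1} (insert w (M - {y}))" (is "ISR E V _ ?M'")
  unfolding ISR_def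
proof (intro conjI ballI)
  show "?M' \<subseteq> VJ V {1..r-1}"
    using M j w unfolding ISR_def VJ_def by auto
  have "stable E M"
    using M unfolding ISR_def by blast
  then show "stable E ?M'"
    using no_nbr sym irrefl unfolding stable_def by blast
  have My: "M \<inter> V j = {y}"
    using ISR_part_eq_singleton[OF M j y] .
  then have "w \<notin> M - {y}"
    using w by auto
  moreover have "finite M" "card M > 0"
    using ISR_lower_finite[OF M] y by (auto simp: card_gt_0_iff)
  ultimately show "card ?M' = card {1..r-1}"
    using M y unfolding ISR_def by simp
  fix i assume i: "i \<in> {1..r-1}"
  show "card (?M' \<inter> V i) = 1"
  proof (cases "i = j")
    case True
    then have "?M' \<inter> V i = {w}"
      using My w by auto
    then show ?thesis by simp
  next
    case False
    moreover have "i \<in> {1..r}" "j \<in> {1..r}"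
      using i j by auto
    ultimately have "V i \<inter> V j = {}"
      using disj by blast
    then have "?M' \<inter> V i = M \<inter> V i"
      using w y by auto
    then show ?thesis
      using M i unfolding ISR_def by simp
  qed
qed

subsection \<open>Alternating sequences\<close>

definition nbrs_in :: "'a set \<Rightarrow> 'a set \<Rightarrow> 'a set" where
  "nbrs_in M X = {v\<in>M. \<exists>x\<in>X. E x v}"

definition hit_parts :: "'a set \<Rightarrow> 'a set \<Rightarrow> nat set" where
  "hit_parts M X = {i\<in>{1..r-1}. nbrs_in M X \<inter> V i \<noteq> {}}"

definition deg :: "'a set \<Rightarrow> 'a \<Rightarrow> nat" where
  "deg M u = card {v\<in>M. E u v}"

inductive alt_seq :: "'a set \<Rightarrow> 'a list \<Rightarrow> bool" for M where
  root: "alt_seq M [x1]"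
| snoc: "\<lbrakk>alt_seq M xs; z \<in> VJ V (hit_parts M (set xs)); z \<notin> set xs;
          \<forall>u\<in>set xs. \<not> E z u; \<forall>u\<in>nbrs_in M (set xs). \<not> E z u\<rbrakk> \<Longrightarrow> alt_seq M (xs @ [z])"

lemma alt_seq_x1: "alt_seq M xs \<Longrightarrow> x1 \<in> set xs"
  by (induction rule: alt_seq.induct) auto

lemma alt_seq_stable: "alt_seq M xs \<Longrightarrow> stable E (set xs)"
  by (induction rule: alt_seq.induct) (auto simp: stable_def irrefl dest: sym)

lemma alt_seq_distinct: "alt_seq M xs \<Longrightarrow> distinct xs"
  by (induction rule: alt_seq.induct) auto

lemma alt_seq_subset: "alt_seq M xs \<Longrightarrow> set xs \<subseteq> VJ V (hit_parts M (set xs)) \<union> {x1}"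
proof (induction rule: alt_seq.induct)
  case (snoc xs z)
  have "VJ V (hit_parts M (set xs)) \<subseteq> VJ V (hit_parts M (set (xs @ [z])))"
    unfolding hit_parts_def nbrs_in_def by (rule VJ_mono) auto
  then show ?case using snoc by auto
qed auto

lemma alt_seq_unique_nbr:
  "alt_seq M xs \<Longrightarrow> y \<in> nbrs_in M (set xs) \<Longrightarrow> \<exists>x. {u\<in>set xs. E y u} = {x}"
proof (induction arbitrary: y rule: alt_seq.induct)
  case root
  then show ?case unfolding nbrs_in_def by (auto dest: sym)
next
  case (snoc xs z)
  show ?case
  proof (cases "y \<in> nbrs_in M (set xs)")
    case True
    then have "{u\<in>set (xs @ [z]). E y u} = {u\<in>set xs. E y u}"
      using snoc.hyps(5) sym by auto
    then show ?thesis using snoc.IH[OF True] by simp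
  next
    case False
    then have "{u\<in>set (xs @ [z]). E y u} = {z}"
      using snoc.prems sym unfolding nbrs_in_def by auto
    then show ?thesis by blast
  qed
qed

lemma alt_seq_prefix:
  "alt_seq M xs \<Longrightarrow> u \<in> set xs \<Longrightarrow> \<exists>a b. xs = a @ u # b \<and> alt_seq M (a @ [u])"
proof (induction rule: alt_seq.induct)
  case root
  then show ?case using alt_seq.root by fastforce
next
  case (snoc xs z)
  show ?case
  proof (cases "u \<in> set xs")
    case True
    then obtain a b where "xs = a @ u # b" "alt_seq M (a @ [u])"
      using snoc.IH by blast
    then show ?thesis by (intro exI[of _ a] exI[of _ "b @ [z]"]) auto
  next
    case False
    then show ?thesis using snoc.prems alt_seq.snoc[OF snoc.hyps] by auto
  qed
qed

lemma alt_seq_snoc_part: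
  "alt_seq M (a @ [w]) \<Longrightarrow> w \<noteq> x1 \<Longrightarrow> w \<in> VJ V (hit_parts M (set a))"
  by (erule alt_seq.cases) auto

lemma alt_seq_transfer:
  "alt_seq M xs \<Longrightarrow> \<forall>u\<in>set (butlast xs). {v\<in>M. E u v} = {v\<in>M'. E u v} \<Longrightarrow> alt_seq M' xs"
proof (induction rule: alt_seq.induct)
  case root
  show ?case by (rule alt_seq.root)
next
  case (snoc xs z)
  then have same: "\<forall>u\<in>set xs. {v\<in>M. E u v} = {v\<in>M'. E u v}"
    by simp
  then have "alt_seq M' xs"
    using snoc.IH by (simp add: in_set_butlastD)
  moreover have "nbrs_in M (set xs) = nbrs_in M' (set xs)"
    using same unfolding nbrs_in_def by blast
  ultimately show ?case
    using alt_seq.snoc snoc.hyps unfolding hit_parts_def by simp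
qed

subsection \<open>Optimal configurations\<close>

definition improves :: "'a set \<Rightarrow> 'a list \<Rightarrow> 'a set \<Rightarrow> 'a list \<Rightarrow> bool" where
  "improves M xs M' xs' \<longleftrightarrow> (map (deg M) xs, map (deg M') xs') \<in> lexord {(a, b). b < a}"

lemma improves_snoc: "improves M xs M (xs @ [z])"
  unfolding improves_def by (simp add: lexord_append_rightI)

lemma improves_deg_drop:
  assumes "map (deg M') a = map (deg M) a" and "deg M' u < deg M u"
  shows "improves M (a @ u # b) M' (a @ [u])"
proof -
  have "(map (deg M) a @ deg M u # map (deg M) b, map (deg M) a @ [deg M' u])
      \<in> lexord {(a, b). b < a}"
    using assms(2) by (intro lexord_append_left_rightI) simp
  then show ?thesis
    unfolding improves_def by (simp add: assms(1))
qed

definition config :: "'a set \<Rightarrow> 'a list \<Rightarrow> bool" where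
  "config M xs \<longleftrightarrow> ISR E V {1..r-1} M \<and> alt_seq M xs"

definition optimal :: "'a set \<Rightarrow> 'a list \<Rightarrow> bool" where
  "optimal M xs \<longleftrightarrow> config M xs \<and> (\<forall>M' xs'. config M' xs' \<longrightarrow> \<not> improves M xs M' xs')"

lemma finite_configs: "finite {(M, xs). config M xs}"
proof (rule finite_subset)
  show "{(M, xs). config M xs} \<subseteq> Pow (VJ V {1..r}) \<times> {xs. set xs \<subseteq> VJ V {1..r} \<and> distinct xs}"
  proof clarify
    fix M xs assume c: "config M xs"
    then have M: "ISR E V {1..r-1} M" and xs: "alt_seq M xs"
      unfolding config_def by auto
    have "VJ V (hit_parts M (set xs)) \<union> {x1} \<subseteq> VJ V {1..r}"
      using VJ_mono[of "hit_parts M (set xs)" "{1..r}"] x1_part r_pos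
      unfolding hit_parts_def VJ_def by auto
    then show "M \<in> Pow (VJ V {1..r}) \<and> xs \<in> {xs. set xs \<subseteq> VJ V {1..r} \<and> distinct xs}"
      using ISR_lower_subset[OF M] alt_seq_subset[OF xs] alt_seq_distinct[OF xs] by auto
  qed
  show "finite (Pow (VJ V {1..r}) \<times> {xs. set xs \<subseteq> VJ V {1..r} \<and> distinct xs})"
    using fin finite_subset_distinct by blast
qed

lemma optimal_exists:
  assumes "ISR E V {1..r-1} M0"
  obtains M xs where "optimal M xs"
proof -
  let ?R = "inv_image (lexord {(a, b). b < a}) (\<lambda>(M, xs). map (deg M) xs)"
  have "trans ?R"
    by (rule trans_inv_image, rule lexord_transI) (auto simp: trans_def)
  moreover have "irrefl ?R"
    by (auto simp: irrefl_def lexord_irreflexive)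
  moreover have "(M0, [x1]) \<in> {(M, xs). config M xs}"
    using assms alt_seq.root unfolding config_def by simp
  ultimately obtain c where "c \<in> {(M, xs). config M xs}"
    and "\<And>c'. c' \<in> {(M, xs). config M xs} \<Longrightarrow> (c, c') \<notin> ?R"
    using finite_has_maximal_wrt[OF finite_configs] by metis
  then show thesis
    using that unfolding optimal_def improves_def by (cases c) fastforce
qed

text \<open>The exchange step: if a non-root vertex \<open>w\<close> of an optimal sequence had no \<open>M\<close>-neighbour,
  then \<open>w\<close> could replace in \<open>M\<close> the vertex \<open>y\<close> of its part, whose unique sequence neighbour
  \<open>x\<close> precedes \<open>w\<close>; the prefix ending at \<open>x\<close> stays alternating and \<open>x\<close> loses a neighbour.\<close>

lemma optimal_seq_vertex_has_nbr:
  assumes opt: "optimal M xs" and w: "w \<in> set xs" "w \<noteq> x1"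
  shows "\<exists>v\<in>M. E w v"
proof (rule ccontr)
  assume "\<not> ?thesis"
  then have no_nbr: "\<forall>v\<in>M. \<not> E w v" by blast
  have M: "ISR E V {1..r-1} M" and seq: "alt_seq M xs"
    using opt unfolding optimal_def config_def by auto
  have X: "stable E (set xs)" and dist: "distinct xs"
    using alt_seq_stable[OF seq] alt_seq_distinct[OF seq] .
  obtain a b where xs: "xs = a @ w # b" and "alt_seq M (a @ [w])"
    using alt_seq_prefix[OF seq w(1)] by blast
  then have "w \<in> VJ V (hit_parts M (set a))"
    using alt_seq_snoc_part w(2) by blast
  then obtain j where j: "j \<in> hit_parts M (set a)" "w \<in> V j"
    unfolding VJ_def by blast
  then obtain y where y: "y \<in> nbrs_in M (set a)" "y \<in> V j" and j_lower: "j \<in> {1..r-1}"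
    unfolding hit_parts_def by blast
  then obtain x where x: "x \<in> set a" "E x y" and "y \<in> M"
    unfolding nbrs_in_def by blast
  have xX: "x \<in> set xs" using x xs by auto
  then have "y \<in> nbrs_in M (set xs)"
    using x \<open>y \<in> M\<close> unfolding nbrs_in_def by blast
  then obtain x' where "{u\<in>set xs. E y u} = {x'}"
    using alt_seq_unique_nbr[OF seq] by blast
  moreover have "x \<in> {u\<in>set xs. E y u}"
    using xX x(2) sym by blast
  ultimately have y_nbr: "{u\<in>set xs. E y u} = {x}"
    by simp
  obtain a' b' where xs': "xs = a' @ x # b'" and prefix: "alt_seq M (a' @ [x])"
    using alt_seq_prefix[OF seq xX] by blast
  define M' where "M' = insert w (M - {y})"
  have M': "ISR E V {1..r-1} M'"
    unfolding M'_def using ISR_swap[OF M j_lower \<open>y \<in> M\<close> y(2) j(2) no_nbr] .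
  have "\<not> E x w" using X xX w(1) unfolding stable_def by blast
  have same_nbrs: "{v\<in>M. E u v} = {v\<in>M'. E u v}" if u: "u \<in> set a'" for u
  proof -
    have uX: "u \<in> set xs" and "u \<noteq> x"
      using u xs' dist by auto
    then have "u \<notin> {u\<in>set xs. E y u}"
      using y_nbr by blast
    then have "\<not> E u y"
      using uX sym by blast
    moreover have "\<not> E u w"
      using X uX w(1) unfolding stable_def by blast
    ultimately show ?thesis
      unfolding M'_def by auto
  qed
  then have seq': "alt_seq M' (a' @ [x])"
    using alt_seq_transfer[OF prefix] by simp
  have same_degs: "map (deg M') a' = map (deg M) a'"
    using same_nbrs unfolding deg_def by simp
  have "{v\<in>M'. E x v} = {v\<in>M. E x v} - {y}"
    using \<open>\<not> E x w\<close> unfolding M'_def by auto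
  moreover have "card ({v\<in>M. E x v} - {y}) < card {v\<in>M. E x v}"
    using ISR_lower_finite[OF M] x(2) \<open>y \<in> M\<close> by (intro card_Diff1_less) simp_all
  ultimately have "deg M' x < deg M x"
    unfolding deg_def by simp
  then have "improves M xs M' (a' @ [x])"
    using improves_deg_drop[OF same_degs] xs' by simp
  then show False
    using opt M' seq' unfolding optimal_def config_def by blast
qed

lemma optimal_dominates:
  assumes opt: "optimal M xs" and no_isr: "\<not> ISR E V {1..r} (insert x1 M)"
  shows "totally_dominates E (set xs \<union> nbrs_in M (set xs)) (VJ V (hit_parts M (set xs)) \<union> {x1})"
  unfolding totally_dominates_def
proof
  fix w assume w: "w \<in> VJ V (hit_parts M (set xs)) \<union> {x1}"
  have M: "ISR E V {1..r-1} M" and seq: "alt_seq M xs"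
    using opt unfolding optimal_def config_def by auto
  show "\<exists>d\<in>set xs \<union> nbrs_in M (set xs). E w d"
  proof (cases "w \<in> set xs")
    case True
    have "\<exists>v\<in>M. E w v"
    proof (cases "w = x1")
      case True
      then show ?thesis using ISR_insert_x1[OF M] no_isr by blast
    next
      case False
      then show ?thesis using optimal_seq_vertex_has_nbr[OF opt \<open>w \<in> set xs\<close>] by blast
    qed
    then show ?thesis using True unfolding nbrs_in_def by blast
  next
    case False
    show ?thesis
    proof (rule ccontr)
      assume "\<not> ?thesis"
      then have "alt_seq M (xs @ [w])"
        using w False alt_seq_x1[OF seq] alt_seq.snoc[OF seq] by auto
      then show False
        using opt M improves_snoc unfolding optimal_def config_def by blast
    qed
  qed
qed

definition obstruction :: "nat set \<Rightarrow> 'a set \<Rightarrow> 'a set \<Rightarrow> bool" where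
  "obstruction J X Y \<longleftrightarrow> J \<subseteq> {1..r-1}
     \<and> X \<union> Y \<subseteq> VJ V J \<union> {x1}
     \<and> totally_dominates E (X \<union> Y) (VJ V J \<union> {x1})
     \<and> X \<inter> Y = {} \<and> stable E X \<and> stable E Y
     \<and> partial_ISR E V J Y
     \<and> (\<forall>y\<in>Y. card {x\<in>X. E y x} = 1)
     \<and> x1 \<in> X"

lemma config_obstruction:
  assumes c: "config M xs"
    and dom: "totally_dominates E (set xs \<union> nbrs_in M (set xs)) (VJ V (hit_parts M (set xs)) \<union> {x1})"
  shows "obstruction (hit_parts M (set xs)) (set xs) (nbrs_in M (set xs))"
proof -
  have M: "ISR E V {1..r-1} M" and seq: "alt_seq M xs"
    using c unfolding config_def by auto
  let ?X = "set xs" and ?Y = "nbrs_in M (set xs)" and ?J = "hit_parts M (set xs)"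
  have X: "stable E ?X" using alt_seq_stable[OF seq] .
  have YM: "?Y \<subseteq> M" unfolding nbrs_in_def by auto
  have "?Y \<subseteq> VJ V ?J"
    using YM M unfolding ISR_def hit_parts_def VJ_def by blast
  moreover have "stable E ?Y"
    using YM M unfolding ISR_def stable_def by blast
  moreover have "card (?Y \<inter> V i) \<le> 1" if "i \<in> ?J" for i
  proof -
    have "card (?Y \<inter> V i) \<le> card (M \<inter> V i)"
      using YM ISR_lower_finite[OF M] by (intro card_mono) auto
    then show ?thesis
      using M that unfolding ISR_def hit_parts_def by auto
  qed
  moreover have "?X \<inter> ?Y = {}"
    using X unfolding stable_def nbrs_in_def by blast
  moreover have "\<forall>y\<in>?Y. card {x\<in>?X. E y x} = 1"
    using alt_seq_unique_nbr[OF seq] by fastforce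
  ultimately show ?thesis
    using X dom alt_seq_subset[OF seq] alt_seq_x1[OF seq]
    unfolding obstruction_def partial_ISR_def hit_parts_def by auto
qed

end

theorem lemma3:
  fixes E :: "'a \<Rightarrow> 'a \<Rightarrow> bool" and V :: "nat \<Rightarrow> 'a set" and r :: nat and x1 :: 'a
  assumes sym: "\<And>u v. E u v \<Longrightarrow> E v u"
    and irrefl: "\<And>v. \<not> E v v"
    and r_pos: "1 \<le> r"
    and fin: "finite (VJ V {1..r})"
    and disj: "\<And>i j. i \<in> {1..r} \<Longrightarrow> j \<in> {1..r} \<Longrightarrow> i \<noteq> j \<Longrightarrow> V i \<inter> V j = {}"
    and parts_stable: "\<And>i. i \<in> {1..r} \<Longrightarrow> stable E (V i)"
    and x1: "x1 \<in> V r"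
    and isr: "\<exists>S. ISR E V {1..r-1} S"
    and no_obstr: "\<not> (\<exists>J X Y. J \<subseteq> {1..r-1}
          \<and> X \<union> Y \<subseteq> VJ V J \<union> {x1}
          \<and> totally_dominates E (X \<union> Y) (VJ V J \<union> {x1})
          \<and> X \<inter> Y = {} \<and> stable E X \<and> stable E Y
          \<and> partial_ISR E V J Y
          \<and> (\<forall>y\<in>Y. card {x\<in>X. E y x} = 1)
          \<and> x1 \<in> X)"
  shows "\<exists>S. ISR E V {1..r} S \<and> x1 \<in> S"
proof -
  interpret isr_partition E V r x1
    using sym irrefl r_pos fin disj x1 by unfold_locales auto
  obtain M0 where "ISR E V {1..r-1} M0" using isr by blast
  then obtain M xs where opt: "optimal M xs" by (rule optimal_exists)
  show ?thesis
  proof (rule ccontr)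
    assume "\<not> ?thesis"
    then have "\<not> ISR E V {1..r} (insert x1 M)" by blast
    then have "obstruction (hit_parts M (set xs)) (set xs) (nbrs_in M (set xs))"
      using config_obstruction optimal_dominates opt unfolding optimal_def by blast
    then show False
      using no_obstr unfolding obstruction_def by blast
  qed
qed

end
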